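(* Let $G$ be a countable group, $\mu$ a probability measure on $G$, and $(X,\xi)$ a $(G,\mu)$-stationary space. Then the map \[ [2,\infty)\to[0,\infty),\qquad p\mapsto-p\log\|\pi_{q,X}(\mu)\|, \] where $q$ is the conjugate exponent of $p$ and $\|\cdot\|$ is the operator norm on $B(L^q(X,\xi))$, is increasing and bounded by $h_\mu(X,\xi)$.
   Context: A $(G,\mu)$-stationary space is a standard probability space $(X,\xi)$ with a measurable non-singular $G$-action such that $\sum_s\mu(s)\xi(s^{-1}A)=\xi(A)$. Write $(s\xi)(A)=\xi(s^{-1}A)$ and $\rho(s,x)=\frac{d(s^{-1}\xi)}{d\xi}(x)$. The $L^q$-Koopman representation is $[\pi_{q,X}(s)f](x)=[\frac{d(s\xi)}{d\xi}(x)]^{1/q}f(s^{-1}x)$ on $L^q(X,\xi)$, and $\pi_{q,X}(\mu)=\sum_s\mu(s)\pi_{q,X}(s)$. The Furstenberg entropy is $h_\mu(X,\xi)=-\sum_s\mu(s)\int_X\log\rho(s,x)d\xi(x)$. *)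

theory Defs
  imports "HOL-Probability.Probability" "HOL-Algebra.Group"
begin

definition stationary_space ::
  "('g, 'b) monoid_scheme \<Rightarrow> 'g pmf \<Rightarrow> ('g \<Rightarrow> 'x \<Rightarrow> 'x) \<Rightarrow> 'x measure \<Rightarrow> bool" where
  "stationary_space G \<mu> act M \<longleftrightarrow>
     prob_space M \<and>
     (\<forall>g\<in>carrier G. act g \<in> M \<rightarrow>\<^sub>M M) \<and>
     (\<forall>x\<in>space M. act \<one>\<^bsub>G\<^esub> x = x) \<and>
     (\<forall>g\<in>carrier G. \<forall>h\<in>carrier G. \<forall>x\<in>space M. act (g \<otimes>\<^bsub>G\<^esub> h) x = act g (act h x)) \<and>
     (\<forall>g\<in>carrier G. \<forall>A\<in>sets M.
         emeasure M (act g -` A \<inter> space M) = 0 \<longleftrightarrow> emeasure M A = 0) \<and>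
     (\<forall>A\<in>sets M.
         (\<Sum>\<^sub>\<infinity>s\<in>carrier G. pmf \<mu> s * measure M (act s -` A \<inter> space M)) = measure M A)"

definition Lq_space :: "'x measure \<Rightarrow> real \<Rightarrow> ('x \<Rightarrow> complex) set" where
  "Lq_space M q = {f. f \<in> borel_measurable M \<and> integrable M (\<lambda>x. norm (f x) powr q)}"

definition Lq_norm :: "'x measure \<Rightarrow> real \<Rightarrow> ('x \<Rightarrow> complex) \<Rightarrow> real" where
  "Lq_norm M q f = (\<integral>x. norm (f x) powr q \<partial>M) powr (1 / q)"

definition Lq_opnorm :: "'x measure \<Rightarrow> real \<Rightarrow> (('x \<Rightarrow> complex) \<Rightarrow> ('x \<Rightarrow> complex)) \<Rightarrow> real" where
  "Lq_opnorm M q T = Sup {Lq_norm M q (T f) | f. f \<in> Lq_space M q \<and> Lq_norm M q f \<le> 1}"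

text \<open>pi_{q,X}(mu) f (x) = sum_s mu(s) [d(s xi)/d xi (x)]^{1/q} f(s^{-1} x),
where s xi = distr M M (act s), i.e. (s xi)(A) = xi(s^{-1} A).\<close>

definition koopman_mu ::
  "('g, 'b) monoid_scheme \<Rightarrow> 'g pmf \<Rightarrow> ('g \<Rightarrow> 'x \<Rightarrow> 'x) \<Rightarrow> 'x measure \<Rightarrow> real
     \<Rightarrow> ('x \<Rightarrow> complex) \<Rightarrow> ('x \<Rightarrow> complex)" where
  "koopman_mu G \<mu> act M q f = (\<lambda>x. \<Sum>\<^sub>\<infinity>s\<in>carrier G.
      complex_of_real (pmf \<mu> s * enn2real (RN_deriv M (distr M M (act s)) x) powr (1 / q))
        * f (act (inv\<^bsub>G\<^esub> s) x))"

definition rn_rho ::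
  "('g, 'b) monoid_scheme \<Rightarrow> ('g \<Rightarrow> 'x \<Rightarrow> 'x) \<Rightarrow> 'x measure \<Rightarrow> 'g \<Rightarrow> 'x \<Rightarrow> real" where
  "rn_rho G act M s x = enn2real (RN_deriv M (distr M M (act (inv\<^bsub>G\<^esub> s))) x)"

text \<open>Furstenberg entropy h = - sum_s mu(s) int log rho(s,x) dxi, valued in [0,infinity];
the integral - int log rho is written as (int (log rho)^- ) - (int (log rho)^+),
the positive part being finite (it is at most int rho = 1).\<close>

definition furstenberg_entropy ::
  "('g, 'b) monoid_scheme \<Rightarrow> 'g pmf \<Rightarrow> ('g \<Rightarrow> 'x \<Rightarrow> 'x) \<Rightarrow> 'x measure \<Rightarrow> ennreal" where
  "furstenberg_entropy G \<mu> act M = (\<Sum>\<^sub>\<infinity>s\<in>carrier G. ennreal (pmf \<mu> s) *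
      ((\<integral>\<^sup>+x. ennreal (- ln (rn_rho G act M s x)) \<partial>M)
        - (\<integral>\<^sup>+x. ennreal (ln (rn_rho G act M s x)) \<partial>M)))"

end

theory Submission
  imports Defs
begin

text \<open>
  Write \<open>r\<^sub>s = d(s\<xi>)/d\<xi>\<close> and, for \<open>F \<ge> 0\<close>, \<open>A\<^sub>t F = \<Sum>\<^sub>s \<mu>(s) (r\<^sub>s \<cdot> F \<circ> s\<^sup>-\<^sup>1)\<^sup>t\<close>, so that
  \<open>|\<pi>\<^sub>q(\<mu>) f| \<le> A\<^bsub>1/q\<^esub>(|f|\<^sup>q)\<close> with equality for \<open>f \<ge> 0\<close>. Hoelder's inequality in \<open>s\<close> makes
  \<open>t \<mapsto> A\<^sub>t F(x)\<close> log-convex, and by the change of variables formula \<open>A\<^sub>1\<close> does not increase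
  integrals. Hence \<open>\<parallel>\<pi>\<^sub>q(\<mu>)\<parallel> \<le> 1\<close>, and interpolating between \<open>L\<^sup>q\<close> and \<open>L\<^sup>1\<close> (Hoelder in \<open>x\<close>)
  gives \<open>\<parallel>\<pi>\<^bsub>q'\<^esub>(\<mu>)\<parallel> \<le> \<parallel>\<pi>\<^sub>q(\<mu>)\<parallel>\<^bsup>1-\<theta>\<^esup>\<close> whenever \<open>1/q' = (1-\<theta>)/q + \<theta>\<close>. For conjugate exponents
  of \<open>p \<le> p'\<close> one has \<open>1 - \<theta> = p/p'\<close>, which is the monotonicity of \<open>p \<mapsto> -p log \<parallel>\<pi>\<^sub>q(\<mu>)\<parallel>\<close>.

  For the entropy bound, test on the constant function:
  \<open>\<parallel>\<pi>\<^sub>q(\<mu>)\<parallel> \<ge> \<integral> \<pi>\<^sub>q(\<mu>) 1 = \<Sum>\<^sub>s \<mu>(s) \<integral> r\<^sub>s\<^bsup>1/q\<^esup>\<close>. The cocycle identity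
  \<open>r\<^sub>s(s y) \<rho>(s, y) = 1\<close> turns \<open>\<integral> r\<^sub>s\<^bsup>1-c\<^esup>\<close> into \<open>\<integral> \<rho>(s, \<cdot>)\<^sup>c\<close>, which by Jensen's inequality
  is at least \<open>exp (c \<integral> log \<rho>(s, \<cdot>))\<close>; Jensen once more, now for \<open>\<mu>\<close>, gives
  \<open>\<parallel>\<pi>\<^sub>q(\<mu>)\<parallel> \<ge> exp (- h\<^sub>\<mu>(X, \<xi>) / p)\<close> with \<open>c = 1 - 1/q = 1/p\<close>.
\<close>

section \<open>Hoelder and Jensen inequalities\<close>

lemma powr_mult_le_Young:
  fixes x y a b :: real
  assumes "0 \<le> x" "0 \<le> y" "0 < a" "0 < b" and \<alpha>\<beta>: "0 \<le> \<alpha>" "0 \<le> \<beta>" "\<alpha> + \<beta> = 1"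
  shows "x powr \<alpha> * y powr \<beta> \<le> a powr \<alpha> * b powr \<beta> * (\<alpha> * x / a + \<beta> * y / b)"
proof -
  have "(x / a) powr \<alpha> * (y / b) powr \<beta> \<le> \<alpha> * (x / a) + \<beta> * (y / b)"
    using Youngs_inequality_0[OF \<alpha>\<beta>, of "x / a" "y / b"] assms
    by (cases "x = 0 \<or> y = 0") (auto simp: less_le)
  then have "a powr \<alpha> * b powr \<beta> * ((x / a) powr \<alpha> * (y / b) powr \<beta>)
      \<le> a powr \<alpha> * b powr \<beta> * (\<alpha> * (x / a) + \<beta> * (y / b))"
    by (intro mult_left_mono) auto
  then show ?thesis
    using assms by (simp add: powr_divide field_simps)
qed

lemma powr_interpolate:
  fixes a d :: real
  assumes "0 \<le> a" "0 \<le> d" "0 \<le> \<theta>" "\<theta> \<le> 1"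
  shows "(a * d powr t0) powr (1 - \<theta>) * (a * d powr t1) powr \<theta> = a * d powr ((1 - \<theta>) * t0 + \<theta> * t1)"
proof (cases "a = 0 \<or> d = 0")
  case False
  have "(a * d powr t0) powr (1 - \<theta>) * (a * d powr t1) powr \<theta>
      = (a powr (1 - \<theta>) * a powr \<theta>) * (d powr ((1 - \<theta>) * t0) * d powr (\<theta> * t1))"
    using assms by (simp add: powr_mult powr_powr ac_simps)
  also have "\<dots> = a * d powr ((1 - \<theta>) * t0 + \<theta> * t1)"
    using assms False by (simp add: powr_add[symmetric])
  finally show ?thesis .
qed auto

lemma nn_integral_powr_mult_le:
  fixes X Y :: "'a \<Rightarrow> real"
  assumes [measurable]: "X \<in> borel_measurable N" "Y \<in> borel_measurable N"
    and X_nonneg: "\<And>x. x \<in> space N \<Longrightarrow> 0 \<le> X x" and Y_nonneg: "\<And>x. x \<in> space N \<Longrightarrow> 0 \<le> Y x"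
    and \<alpha>\<beta>: "0 \<le> \<alpha>" "0 \<le> \<beta>" "\<alpha> + \<beta> = 1"
    and X_le: "(\<integral>\<^sup>+x. ennreal (X x) \<partial>N) \<le> ennreal a"
    and Y_le: "(\<integral>\<^sup>+x. ennreal (Y x) \<partial>N) \<le> ennreal b"
    and "0 \<le> a" "0 \<le> b"
  shows "(\<integral>\<^sup>+x. ennreal (X x powr \<alpha> * Y x powr \<beta>) \<partial>N) \<le> ennreal (a powr \<alpha> * b powr \<beta>)"
proof (cases "a = 0 \<or> b = 0")
  case True
  have "(\<integral>\<^sup>+x. X x \<partial>N) = 0 \<longleftrightarrow> (AE x in N. ennreal (X x) = 0)"
    "(\<integral>\<^sup>+x. Y x \<partial>N) = 0 \<longleftrightarrow> (AE x in N. ennreal (Y x) = 0)"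
    by (rule nn_integral_0_iff_AE, measurable)+
  then have "AE x in N. ennreal (X x) = 0 \<or> ennreal (Y x) = 0"
    using True X_le Y_le by (auto elim: eventually_mono)
  then have "AE x in N. ennreal (X x powr \<alpha> * Y x powr \<beta>) = 0"
    by (rule AE_mp) (auto intro!: AE_I2 dest: X_nonneg Y_nonneg)
  then have "(\<integral>\<^sup>+x. ennreal (X x powr \<alpha> * Y x powr \<beta>) \<partial>N) = (\<integral>\<^sup>+x. 0 \<partial>N)"
    by (rule nn_integral_cong_AE)
  then show ?thesis by simp
next
  case False
  then have "0 < a" "0 < b" using \<open>0 \<le> a\<close> \<open>0 \<le> b\<close> by auto
  define c where "c = a powr \<alpha> * b powr \<beta>"
  have Young: "X x powr \<alpha> * Y x powr \<beta> \<le> c * \<alpha> / a * X x + c * \<beta> / b * Y x" if "x \<in> space N" for x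
    using powr_mult_le_Young[OF X_nonneg[OF that] Y_nonneg[OF that] \<open>0 < a\<close> \<open>0 < b\<close> \<alpha>\<beta>]
      \<open>0 < a\<close> \<open>0 < b\<close>
    by (simp add: c_def field_simps)
  have "(\<integral>\<^sup>+x. ennreal (X x powr \<alpha> * Y x powr \<beta>) \<partial>N)
      \<le> (\<integral>\<^sup>+x. ennreal (c * \<alpha> / a) * X x + ennreal (c * \<beta> / b) * Y x \<partial>N)"
    using Young \<open>0 < a\<close> \<open>0 < b\<close> \<alpha>\<beta> X_nonneg Y_nonneg
    by (intro nn_integral_mono)
      (simp add: c_def ennreal_mult[symmetric] ennreal_plus[symmetric] del: ennreal_plus)
  also have "\<dots> = ennreal (c * \<alpha> / a) * (\<integral>\<^sup>+x. X x \<partial>N) + ennreal (c * \<beta> / b) * (\<integral>\<^sup>+x. Y x \<partial>N)"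
    by (simp add: nn_integral_add nn_integral_cmult)
  also have "\<dots> \<le> ennreal (c * \<alpha> / a) * ennreal a + ennreal (c * \<beta> / b) * ennreal b"
    by (intro add_mono mult_left_mono X_le Y_le) auto
  also have "\<dots> = ennreal c"
    using \<open>0 < a\<close> \<open>0 < b\<close> \<alpha>\<beta>
    by (simp add: c_def ennreal_mult[symmetric] ennreal_plus[symmetric]
        flip: distrib_left del: ennreal_plus)
  finally show ?thesis by (simp add: c_def)
qed

lemma (in prob_space) exp_integral_le_nn_integral_exp:
  assumes Z: "integrable M Z"
  shows "ennreal (exp (\<integral>x. Z x \<partial>M)) \<le> (\<integral>\<^sup>+x. ennreal (exp (Z x)) \<partial>M)"
proof (cases "(\<integral>\<^sup>+x. ennreal (exp (Z x)) \<partial>M) = \<infinity>")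
  case False
  have "integrable M (\<lambda>x. exp (Z x))"
    using Z False by (intro integrableI_nonneg) (auto simp: top.not_eq_extremum)
  then have "exp (\<integral>x. Z x \<partial>M) \<le> (\<integral>x. exp (Z x) \<partial>M)"
    using Z exp_convex by (intro jensens_inequality[where I = UNIV]) auto
  also have "\<dots> = enn2real (\<integral>\<^sup>+x. ennreal (exp (Z x)) \<partial>M)"
    using Z by (intro integral_eq_nn_integral) auto
  finally have "ennreal (exp (\<integral>x. Z x \<partial>M)) \<le> ennreal (enn2real (\<integral>\<^sup>+x. ennreal (exp (Z x)) \<partial>M))"
    by (rule ennreal_leI)
  then show ?thesis
    using False by (simp add: ennreal_enn2real_if)
qed simp

lemma (in prob_space) exp_neg_entropy_le_nn_integral_powr:
  fixes \<rho> :: "'a \<Rightarrow> real"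
  assumes [measurable]: "\<rho> \<in> borel_measurable M" and pos: "AE x in M. 0 < \<rho> x"
    and finite_mass: "(\<integral>\<^sup>+x. ennreal (\<rho> x) \<partial>M) \<noteq> \<infinity>"
    and finite_entropy: "(\<integral>\<^sup>+x. ennreal (- ln (\<rho> x)) \<partial>M) - (\<integral>\<^sup>+x. ennreal (ln (\<rho> x)) \<partial>M) \<noteq> \<infinity>"
    and "0 \<le> c"
  shows "ennreal (exp (- c * enn2real
      ((\<integral>\<^sup>+x. ennreal (- ln (\<rho> x)) \<partial>M) - (\<integral>\<^sup>+x. ennreal (ln (\<rho> x)) \<partial>M))))
    \<le> (\<integral>\<^sup>+x. ennreal (\<rho> x powr c) \<partial>M)"
proof -
  define P where "P = (\<integral>\<^sup>+x. ennreal (ln (\<rho> x)) \<partial>M)"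
  define Q where "Q = (\<integral>\<^sup>+x. ennreal (- ln (\<rho> x)) \<partial>M)"
  have "P \<le> (\<integral>\<^sup>+x. ennreal (\<rho> x) \<partial>M)"
    unfolding P_def using pos
    by (intro nn_integral_mono_AE) (auto elim!: eventually_mono intro!: ennreal_leI
        order_trans[OF ln_le_minus_one])
  then have "P \<noteq> \<infinity>" using finite_mass by (auto simp: top_unique)
  moreover have "Q \<noteq> \<infinity>" using finite_entropy \<open>P \<noteq> \<infinity>\<close> by (auto simp: P_def Q_def)
  ultimately have ln_integrable: "integrable M (\<lambda>x. ln (\<rho> x))"
    by (simp add: real_integrable_def P_def Q_def)
  have "- enn2real (Q - P) \<le> enn2real P - enn2real Q"
    using \<open>P \<noteq> \<infinity>\<close> \<open>Q \<noteq> \<infinity>\<close>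
    by (cases P; cases Q; cases "enn2real P \<le> enn2real Q") (auto simp: ennreal_minus ennreal_neg)
  also have "\<dots> = (\<integral>x. ln (\<rho> x) \<partial>M)"
    using real_lebesgue_integral_def[OF ln_integrable] by (simp add: P_def Q_def)
  finally have "c * - enn2real (Q - P) \<le> c * (\<integral>x. ln (\<rho> x) \<partial>M)"
    using \<open>0 \<le> c\<close> by (rule mult_left_mono)
  then have "exp (- c * enn2real (Q - P)) \<le> exp (\<integral>x. c * ln (\<rho> x) \<partial>M)"
    by simp
  also have "ennreal \<dots> \<le> (\<integral>\<^sup>+x. ennreal (exp (c * ln (\<rho> x))) \<partial>M)"
    using ln_integrable by (intro exp_integral_le_nn_integral_exp) auto
  also have "\<dots> = (\<integral>\<^sup>+x. ennreal (\<rho> x powr c) \<partial>M)"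
    using pos
    by (intro nn_integral_cong_AE) (auto elim!: eventually_mono simp: powr_def mult.commute)
  finally show ?thesis by (simp add: P_def Q_def ennreal_leI)
qed

lemma infsum_ennreal_eq_nn_integral_count_space:
  fixes f :: "'a \<Rightarrow> ennreal"
  assumes "countable A"
  shows "infsum f A = (\<integral>\<^sup>+x. f x \<partial>count_space A)"
proof (cases "finite A")
  case True
  then show ?thesis by (simp add: nn_integral_count_space_finite)
next
  case False
  have bij: "bij_betw (from_nat_into A) UNIV A"
    using assms False by (rule bij_betw_from_nat_into)
  have "infsum f A = infsum (\<lambda>n. f (from_nat_into A n)) UNIV"
    by (rule infsum_reindex_bij_betw[OF bij, symmetric])
  also have "\<dots> = (\<Sum>n. f (from_nat_into A n))"
    by (intro sums_unique has_sum_imp_sums has_sum_infsum nonneg_summable_on_complete) simp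
  also have "\<dots> = (\<integral>\<^sup>+n. f (from_nat_into A n) \<partial>count_space UNIV)"
    by (simp add: nn_integral_count_space_nat)
  also have "\<dots> = (\<integral>\<^sup>+x. f x \<partial>count_space A)"
    by (rule nn_integral_bij_count_space[OF bij])
  finally show ?thesis .
qed

lemma norm_infsum_le_nn_integral_count_space:
  fixes c :: "'a \<Rightarrow> complex"
  shows "ennreal (norm (infsum c A)) \<le> (\<integral>\<^sup>+x. ennreal (norm (c x)) \<partial>count_space A)"
proof (cases "(\<integral>\<^sup>+x. ennreal (norm (c x)) \<partial>count_space A) = \<infinity>")
  case False
  then have integrable: "integrable (count_space A) c"
    by (simp add: integrable_iff_bounded top.not_eq_extremum)
  then have "norm (infsum c A) \<le> infsetsum (\<lambda>x. norm (c x)) A"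
    using infsetsum_infsum[of c A] norm_infsetsum_bound[of c A] by (simp add: abs_summable_on_def)
  also have "ennreal \<dots> = (\<integral>\<^sup>+x. ennreal (norm (c x)) \<partial>count_space A)"
    using integrable by (simp add: nn_integral_conv_infsetsum abs_summable_on_def)
  finally show ?thesis by (simp add: ennreal_leI)
qed simp

lemma infsum_of_real_eq_nn_integral_count_space:
  fixes g :: "'a \<Rightarrow> real"
  assumes "\<And>x. x \<in> A \<Longrightarrow> 0 \<le> g x"
  shows "infsum (\<lambda>x. complex_of_real (g x)) A
      = complex_of_real (enn2real (\<integral>\<^sup>+x. ennreal (g x) \<partial>count_space A))"
proof (cases "(\<lambda>x. complex_of_real (g x)) summable_on A")
  case True
  then have "integrable (count_space A) g"
    by (simp only: summable_on_iff_abs_summable_on_complex abs_summable_equivalent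
        abs_summable_on_def complex_of_real_integrable_eq)
  then have "(\<integral>\<^sup>+x. ennreal (g x) \<partial>count_space A) = ennreal (infsetsum g A)"
    using assms by (simp add: nn_integral_conv_infsetsum abs_summable_on_def)
  moreover have "0 \<le> infsetsum g A"
    using assms by (simp add: infsetsum_nonneg)
  ultimately show ?thesis
    using \<open>integrable (count_space A) g\<close> infsetsum_infsum[of "\<lambda>x. complex_of_real (g x)" A]
    by (simp add: abs_summable_on_def infsetsum_of_real)
next
  case False
  then have "\<not> integrable (count_space A) g"
    by (simp only: summable_on_iff_abs_summable_on_complex abs_summable_equivalent
        abs_summable_on_def complex_of_real_integrable_eq not_False_eq_True)
  then have "\<not> (\<integral>\<^sup>+x. ennreal (g x) \<partial>count_space A) < \<infinity>"
    using assms integrableI_nonneg[of g "count_space A"] by (auto simp: AE_count_space)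
  then have "(\<integral>\<^sup>+x. ennreal (g x) \<partial>count_space A) = \<infinity>"
    by (simp add: less_top[symmetric])
  then show ?thesis using False by (simp add: infsum_not_exists)
qed

lemma borel_measurable_nn_integral_count_space:
  fixes f :: "'i \<Rightarrow> 'a \<Rightarrow> ennreal"
  assumes "countable I" and "\<And>i. i \<in> I \<Longrightarrow> f i \<in> borel_measurable M"
  shows "(\<lambda>x. \<integral>\<^sup>+i. f i x \<partial>count_space I) \<in> borel_measurable M"
proof -
  interpret sigma_finite_measure "count_space I"
    using assms(1) by (rule sigma_finite_measure_count_space_countable)
  have "(\<lambda>(i, x). f i x) \<in> borel_measurable (count_space I \<Otimes>\<^sub>M M)"
    using assms by (intro measurable_pair_measure_countable1) simp_all
  then have "(\<lambda>(x, i). f i x) \<in> borel_measurable (M \<Otimes>\<^sub>M count_space I)"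
    by (subst measurable_pair_swap_iff) (simp add: case_prod_beta)
  then show ?thesis by (intro borel_measurable_nn_integral) (simp add: case_prod_beta)
qed

lemma Lq_norm_le_of_nn_integral_le:
  assumes "0 < q" "0 \<le> C"
    and "(\<integral>\<^sup>+x. ennreal (norm (f x) powr q) \<partial>M) \<le> ennreal (C powr q)"
  shows "Lq_norm M q f \<le> C"
proof -
  have "(\<integral>x. norm (f x) powr q \<partial>M) \<le> C powr q"
    using assms by (intro integral_real_bounded) auto
  then have "Lq_norm M q f \<le> (C powr q) powr (1 / q)"
    unfolding Lq_norm_def using \<open>0 < q\<close> by (intro powr_mono2) auto
  then show ?thesis using assms by (simp add: powr_powr)
qed

lemma nn_integral_le_of_Lq_norm_le:
  assumes "0 < q" and [measurable]: "f \<in> borel_measurable M"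
    and finite: "(\<integral>\<^sup>+x. ennreal (norm (f x) powr q) \<partial>M) \<noteq> \<infinity>"
    and "Lq_norm M q f \<le> C"
  shows "(\<integral>\<^sup>+x. ennreal (norm (f x) powr q) \<partial>M) \<le> ennreal (C powr q)"
proof -
  have "integrable M (\<lambda>x. norm (f x) powr q)"
    using finite by (intro integrableI_nonneg) (auto simp: top.not_eq_extremum)
  then have "(\<integral>\<^sup>+x. ennreal (norm (f x) powr q) \<partial>M) = ennreal (Lq_norm M q f powr q)"
    using \<open>0 < q\<close> by (simp add: nn_integral_eq_integral Lq_norm_def powr_powr)
  also have "\<dots> \<le> ennreal (C powr q)"
    using assms by (intro ennreal_leI powr_mono2) (auto simp: Lq_norm_def)
  finally show ?thesis .
qed

lemma zero_in_Lq_unit_ball: "(\<lambda>_. 0) \<in> Lq_space M q \<and> Lq_norm M q (\<lambda>_. 0) \<le> 1"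
  by (simp add: Lq_space_def Lq_norm_def)

lemma Lq_opnorm_le:
  assumes "\<And>f. f \<in> Lq_space M q \<Longrightarrow> Lq_norm M q f \<le> 1 \<Longrightarrow> Lq_norm M q (T f) \<le> C"
  shows "Lq_opnorm M q T \<le> C"
  unfolding Lq_opnorm_def using assms zero_in_Lq_unit_ball by (intro cSup_least) auto

lemma Lq_norm_le_Lq_opnorm:
  assumes "\<And>f. f \<in> Lq_space M q \<Longrightarrow> Lq_norm M q f \<le> 1 \<Longrightarrow> Lq_norm M q (T f) \<le> C"
    and "f \<in> Lq_space M q" "Lq_norm M q f \<le> 1"
  shows "Lq_norm M q (T f) \<le> Lq_opnorm M q T"
  unfolding Lq_opnorm_def using assms by (intro cSup_upper bdd_aboveI) auto

section \<open>Non-singular actions\<close>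

locale nonsingular_action = prob_space M + group G
  for M :: "'x measure" and G (structure) +
  fixes act :: "'g \<Rightarrow> 'x \<Rightarrow> 'x"
  assumes countable_carrier: "countable (carrier G)"
    and act_measurable: "g \<in> carrier G \<Longrightarrow> act g \<in> M \<rightarrow>\<^sub>M M"
    and act_one: "x \<in> space M \<Longrightarrow> act \<one> x = x"
    and act_mult: "g \<in> carrier G \<Longrightarrow> h \<in> carrier G \<Longrightarrow> x \<in> space M \<Longrightarrow> act (g \<otimes> h) x = act g (act h x)"
    and act_absolutely_continuous: "g \<in> carrier G \<Longrightarrow> absolutely_continuous M (distr M M (act g))"
begin

lemma act_inv_act: "s \<in> carrier G \<Longrightarrow> x \<in> space M \<Longrightarrow> act (inv s) (act s x) = x"
  using act_mult[of "inv s" s x] by (simp add: act_one)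

lemma act_act_inv: "s \<in> carrier G \<Longrightarrow> x \<in> space M \<Longrightarrow> act s (act (inv s) x) = x"
  using act_mult[of s "inv s" x] by (simp add: act_one)

definition rn_deriv_act :: "'g \<Rightarrow> 'x \<Rightarrow> real" where
  "rn_deriv_act s x = enn2real (RN_deriv M (distr M M (act s)) x)"

lemma borel_measurable_rn_deriv_act[measurable]: "rn_deriv_act s \<in> borel_measurable M"
  unfolding rn_deriv_act_def[abs_def] by measurable

lemma rn_deriv_act_nonneg: "0 \<le> rn_deriv_act s x"
  by (simp add: rn_deriv_act_def)

lemma ennreal_rn_deriv_act:
  assumes "s \<in> carrier G"
  shows "AE x in M. ennreal (rn_deriv_act s x) = RN_deriv M (distr M M (act s)) x"
proof -
  have "AE x in M. RN_deriv M (distr M M (act s)) x \<noteq> \<infinity>"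
    using assms act_measurable act_absolutely_continuous
    by (intro RN_deriv_finite prob_space_imp_sigma_finite prob_space_distr) auto
  then show ?thesis
    by (rule AE_mp) (auto intro!: AE_I2 simp: rn_deriv_act_def ennreal_enn2real_if)
qed

lemma nn_integral_rn_deriv_act:
  fixes h :: "'x \<Rightarrow> ennreal"
  assumes s: "s \<in> carrier G" and [measurable]: "h \<in> borel_measurable M"
  shows "(\<integral>\<^sup>+x. rn_deriv_act s x * h x \<partial>M) = (\<integral>\<^sup>+y. h (act s y) \<partial>M)"
proof -
  have "(\<integral>\<^sup>+x. rn_deriv_act s x * h x \<partial>M) = (\<integral>\<^sup>+x. RN_deriv M (distr M M (act s)) x * h x \<partial>M)"
    using ennreal_rn_deriv_act[OF s] by (intro nn_integral_cong_AE) auto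
  also have "\<dots> = integral\<^sup>N (distr M M (act s)) h"
    using act_absolutely_continuous[OF s] by (intro RN_deriv_nn_integral[symmetric]) auto
  also have "\<dots> = (\<integral>\<^sup>+y. h (act s y) \<partial>M)"
    using act_measurable[OF s] by (intro nn_integral_distr) auto
  finally show ?thesis .
qed

lemma nn_integral_rn_deriv_act_transfer:
  fixes h :: "'x \<Rightarrow> ennreal"
  assumes s: "s \<in> carrier G" and [measurable]: "h \<in> borel_measurable M"
  shows "(\<integral>\<^sup>+x. rn_deriv_act s x * h (act (inv s) x) \<partial>M) = (\<integral>\<^sup>+y. h y \<partial>M)"
proof -
  note [measurable] = act_measurable[OF inv_closed[OF s]]
  have "(\<integral>\<^sup>+x. rn_deriv_act s x * h (act (inv s) x) \<partial>M) = (\<integral>\<^sup>+y. h (act (inv s) (act s y)) \<partial>M)"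
    using s by (intro nn_integral_rn_deriv_act) auto
  also have "\<dots> = (\<integral>\<^sup>+y. h y \<partial>M)"
    using s by (intro nn_integral_cong) (simp add: act_inv_act)
  finally show ?thesis .
qed

lemma nn_integral_rn_deriv_act_eq_1: "s \<in> carrier G \<Longrightarrow> (\<integral>\<^sup>+x. rn_deriv_act s x \<partial>M) = 1"
  using nn_integral_rn_deriv_act[of s "\<lambda>_. 1"] by (simp add: emeasure_space_1)

lemma rn_deriv_act_cocycle:
  assumes s: "s \<in> carrier G"
  shows "AE y in M. rn_deriv_act s (act s y) * rn_deriv_act (inv s) y = 1"
proof -
  have s': "inv s \<in> carrier G" using s by simp
  note [measurable] = act_measurable[OF s] act_measurable[OF s']
  define r where "r g = RN_deriv M (distr M M (act g))" for g
  have density_r: "density M (r g) = distr M M (act g)" if "g \<in> carrier G" for g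
    unfolding r_def using act_absolutely_continuous[OF that] by (intro density_RN_deriv) auto
  have "density M (\<lambda>y. r (inv s) y * r s (act s y))
      = density (density M (r (inv s))) (\<lambda>y. r s (act s y))"
    by (rule density_density_eq[symmetric]) (auto simp: r_def)
  also have "\<dots> = distr (density M (\<lambda>x. r s (act s (act (inv s) x)))) M (act (inv s))"
    unfolding density_r[OF s'] by (rule density_distr) (auto simp: r_def)
  also have "density M (\<lambda>x. r s (act s (act (inv s) x))) = density M (r s)"
    using s by (intro density_cong) (auto simp: act_act_inv r_def)
  also have "distr (density M (r s)) M (act (inv s)) = distr M M (act (inv s) \<circ> act s)"
    unfolding density_r[OF s] by (rule distr_distr) auto
  also have "\<dots> = density M (\<lambda>_. 1)"
    using s by (subst distr_cong[where g = "\<lambda>x. x"]) (auto simp: act_inv_act density_1)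
  finally have "AE y in M. r (inv s) y * r s (act s y) = 1"
    by (subst (asm) density_unique_iff) (auto simp: r_def)
  then show ?thesis
    by (rule eventually_mono)
      (simp add: rn_deriv_act_def r_def enn2real_mult[symmetric] mult.commute)
qed

lemma nn_integral_rn_deriv_act_powr:
  assumes s: "s \<in> carrier G"
  shows "(\<integral>\<^sup>+x. ennreal (rn_deriv_act s x powr (1 - c)) \<partial>M)
    = (\<integral>\<^sup>+y. ennreal (rn_deriv_act (inv s) y powr c) \<partial>M)"
proof -
  have split: "r powr (1 - c) = r * r powr (- c)" if "0 \<le> r" for r :: real
    using that powr_add[of r 1 "- c"] by (cases "r = 0") auto
  have inverse: "a powr (- c) = b powr c" if "a * b = 1" "0 \<le> b" for a b :: real
  proof -
    have "b \<noteq> 0" using that by auto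
    then have "a = 1 / b" "0 < b" using that by (auto simp: field_simps)
    then show ?thesis by (simp add: powr_divide powr_minus_divide)
  qed
  have "(\<integral>\<^sup>+x. ennreal (rn_deriv_act s x powr (1 - c)) \<partial>M)
      = (\<integral>\<^sup>+x. rn_deriv_act s x * ennreal (rn_deriv_act s x powr (- c)) \<partial>M)"
    by (simp add: split rn_deriv_act_nonneg ennreal_mult)
  also have "\<dots> = (\<integral>\<^sup>+y. ennreal (rn_deriv_act s (act s y) powr (- c)) \<partial>M)"
    using s act_measurable[OF s] by (intro nn_integral_rn_deriv_act) auto
  also have "\<dots> = (\<integral>\<^sup>+y. ennreal (rn_deriv_act (inv s) y powr c) \<partial>M)"
    using rn_deriv_act_cocycle[OF s]
    by (intro nn_integral_cong_AE) (auto elim!: eventually_mono simp: inverse rn_deriv_act_nonneg)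
  finally show ?thesis .
qed

end

section \<open>Koopman operators of a random walk\<close>

locale random_walk_action = nonsingular_action M G act
  for M :: "'x measure" and G (structure) and act :: "'g \<Rightarrow> 'x \<Rightarrow> 'x" +
  fixes \<mu> :: "'g pmf"
  assumes set_pmf_subset_carrier: "set_pmf \<mu> \<subseteq> carrier G"
begin

text \<open>For \<open>F \<ge> 0\<close>, \<open>koopman_nn t F x\<close> is the series of absolute values defining
  \<open>\<pi>\<^bsub>1/t,X\<^esub>(\<mu>)(F\<^sup>t)(x)\<close>, summed in \<open>ennreal\<close>.\<close>

definition koopman_nn :: "real \<Rightarrow> ('x \<Rightarrow> real) \<Rightarrow> 'x \<Rightarrow> ennreal" where
  "koopman_nn t F x = (\<integral>\<^sup>+s. ennreal (pmf \<mu> s * (rn_deriv_act s x * F (act (inv s) x)) powr t)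
     \<partial>count_space (carrier G))"

abbreviation koopman_opnorm :: "real \<Rightarrow> real" where
  "koopman_opnorm q \<equiv> Lq_opnorm M q (koopman_mu G \<mu> act M q)"

lemma borel_measurable_koopman_nn_term:
  assumes "s \<in> carrier G" and [measurable]: "F \<in> borel_measurable M"
  shows "(\<lambda>x. ennreal (pmf \<mu> s * (rn_deriv_act s x * F (act (inv s) x)) powr t))
    \<in> borel_measurable M"
  using act_measurable[OF inv_closed[OF assms(1)]] by measurable

lemma borel_measurable_koopman_nn[measurable]:
  "F \<in> borel_measurable M \<Longrightarrow> koopman_nn t F \<in> borel_measurable M"
  unfolding koopman_nn_def[abs_def]
  by (intro borel_measurable_nn_integral_count_space countable_carrier
      borel_measurable_koopman_nn_term)

lemma nn_integral_pmf_carrier: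
  "(\<integral>\<^sup>+s. ennreal (pmf \<mu> s) * h s \<partial>count_space (carrier G)) = (\<integral>\<^sup>+s. h s \<partial>measure_pmf \<mu>)"
proof -
  have "(\<integral>\<^sup>+s. ennreal (pmf \<mu> s) * h s \<partial>count_space (carrier G))
      = (\<integral>\<^sup>+s. ennreal (pmf \<mu> s) * h s * indicator (carrier G) s \<partial>count_space UNIV)"
    by (simp add: nn_integral_count_space_indicator)
  also have "\<dots> = (\<integral>\<^sup>+s. ennreal (pmf \<mu> s) * h s \<partial>count_space UNIV)"
    using set_pmf_subset_carrier
    by (intro nn_integral_cong) (auto simp: indicator_def set_pmf_iff)
  finally show ?thesis by (simp add: nn_integral_measure_pmf)
qed

lemma koopman_nn_0_le_1: "koopman_nn 0 F x \<le> 1"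
proof -
  have "koopman_nn 0 F x \<le> (\<integral>\<^sup>+s. ennreal (pmf \<mu> s) \<partial>count_space (carrier G))"
    unfolding koopman_nn_def by (intro nn_integral_mono ennreal_leI) (simp add: powr_zero_eq_one)
  also have "\<dots> \<le> 1"
    by (simp add: nn_integral_pmf measure_pmf.emeasure_le_1)
  finally show ?thesis .
qed

lemma nn_integral_koopman_nn_1_le:
  assumes [measurable]: "F \<in> borel_measurable M" and F_nonneg: "\<And>y. 0 \<le> F y"
  shows "(\<integral>\<^sup>+x. koopman_nn 1 F x \<partial>M) \<le> (\<integral>\<^sup>+y. F y \<partial>M)"
proof -
  have "(\<integral>\<^sup>+x. koopman_nn 1 F x \<partial>M)
      = (\<integral>\<^sup>+s. \<integral>\<^sup>+x. ennreal (pmf \<mu> s * (rn_deriv_act s x * F (act (inv s) x)) powr 1) \<partial>M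
          \<partial>count_space (carrier G))"
    unfolding koopman_nn_def
    by (intro nn_integral_count_space_nn_integral countable_carrier
        borel_measurable_koopman_nn_term assms(1))
  also have "\<dots> = (\<integral>\<^sup>+s. ennreal (pmf \<mu> s) * (\<integral>\<^sup>+y. F y \<partial>M) \<partial>count_space (carrier G))"
  proof (intro nn_integral_cong)
    fix s assume "s \<in> space (count_space (carrier G))"
    then have s: "s \<in> carrier G" by simp
    note [measurable] = act_measurable[OF inv_closed[OF s]]
    have "(\<integral>\<^sup>+x. ennreal (pmf \<mu> s * (rn_deriv_act s x * F (act (inv s) x)) powr 1) \<partial>M)
        = ennreal (pmf \<mu> s) * (\<integral>\<^sup>+x. rn_deriv_act s x * ennreal (F (act (inv s) x)) \<partial>M)"
      using F_nonneg rn_deriv_act_nonneg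
      by (subst nn_integral_cmult[symmetric])
        (auto intro!: nn_integral_cong simp: ennreal_mult mult.assoc)
    also have "\<dots> = ennreal (pmf \<mu> s) * (\<integral>\<^sup>+y. F y \<partial>M)"
      using nn_integral_rn_deriv_act_transfer[OF s, of "\<lambda>y. ennreal (F y)"] by simp
    finally show "(\<integral>\<^sup>+x. ennreal (pmf \<mu> s * (rn_deriv_act s x * F (act (inv s) x)) powr 1) \<partial>M)
        = ennreal (pmf \<mu> s) * (\<integral>\<^sup>+y. F y \<partial>M)" .
  qed
  also have "\<dots> = (\<integral>\<^sup>+s. ennreal (pmf \<mu> s) \<partial>count_space (carrier G)) * (\<integral>\<^sup>+y. F y \<partial>M)"
    by (simp add: nn_integral_multc)
  also have "\<dots> \<le> 1 * (\<integral>\<^sup>+y. F y \<partial>M)"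
    by (intro mult_right_mono) (simp_all add: nn_integral_pmf measure_pmf.emeasure_le_1)
  finally show ?thesis by simp
qed

lemma koopman_nn_log_convex:
  assumes \<theta>: "0 \<le> \<theta>" "\<theta> \<le> 1" and F_nonneg: "\<And>y. 0 \<le> F y"
    and finite: "koopman_nn t0 F x \<noteq> \<infinity>" "koopman_nn t1 F x \<noteq> \<infinity>"
  shows "koopman_nn ((1 - \<theta>) * t0 + \<theta> * t1) F x
    \<le> ennreal (enn2real (koopman_nn t0 F x) powr (1 - \<theta>) * enn2real (koopman_nn t1 F x) powr \<theta>)"
proof -
  define d where "d s = rn_deriv_act s x * F (act (inv s) x)" for s
  have d_nonneg: "0 \<le> d s" for s by (simp add: d_def rn_deriv_act_nonneg F_nonneg)
  have "koopman_nn ((1 - \<theta>) * t0 + \<theta> * t1) F x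
      = (\<integral>\<^sup>+s. ennreal ((pmf \<mu> s * d s powr t0) powr (1 - \<theta>) * (pmf \<mu> s * d s powr t1) powr \<theta>)
          \<partial>count_space (carrier G))"
    unfolding koopman_nn_def d_def[symmetric] using \<theta> d_nonneg by (simp add: powr_interpolate)
  also have "\<dots>
      \<le> ennreal (enn2real (koopman_nn t0 F x) powr (1 - \<theta>) * enn2real (koopman_nn t1 F x) powr \<theta>)"
    using \<theta> finite d_nonneg
    by (intro nn_integral_powr_mult_le) (simp_all add: koopman_nn_def d_def ennreal_enn2real_if)
  finally show ?thesis .
qed

lemma koopman_nn_le_powr:
  assumes t: "0 \<le> t" "t \<le> 1" and F_nonneg: "\<And>y. 0 \<le> F y" and finite: "koopman_nn 1 F x \<noteq> \<infinity>"
  shows "koopman_nn t F x \<le> ennreal (enn2real (koopman_nn 1 F x) powr t)"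
proof -
  have "koopman_nn 0 F x \<noteq> \<infinity>" "enn2real (koopman_nn 0 F x) \<le> 1"
    using koopman_nn_0_le_1[of F x] by (auto simp: top_unique enn2real_leI)
  then have "enn2real (koopman_nn 0 F x) powr (1 - t) \<le> 1"
    using t by (intro powr_le1) auto
  moreover have "koopman_nn t F x
      \<le> ennreal (enn2real (koopman_nn 0 F x) powr (1 - t) * enn2real (koopman_nn 1 F x) powr t)"
    using koopman_nn_log_convex[of t F 0 x 1] t F_nonneg finite \<open>koopman_nn 0 F x \<noteq> \<infinity>\<close> by simp
  ultimately show ?thesis
    by (elim order_trans) (auto intro!: ennreal_leI mult_left_le_one_le)
qed

lemma AE_koopman_nn_finite:
  assumes [measurable]: "F \<in> borel_measurable M" and F_nonneg: "\<And>y. 0 \<le> F y"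
    and finite: "(\<integral>\<^sup>+y. F y \<partial>M) \<noteq> \<infinity>" and t: "0 \<le> t" "t \<le> 1"
  shows "AE x in M. koopman_nn t F x \<noteq> \<infinity>"
proof -
  have "(\<integral>\<^sup>+x. koopman_nn 1 F x \<partial>M) \<le> (\<integral>\<^sup>+y. F y \<partial>M)"
    using F_nonneg by (intro nn_integral_koopman_nn_1_le) auto
  then have "AE x in M. koopman_nn 1 F x \<noteq> \<infinity>"
    using finite by (intro nn_integral_PInf_AE) (auto simp: top_unique)
  then show ?thesis
  proof (rule eventually_mono)
    fix x assume "koopman_nn 1 F x \<noteq> \<infinity>"
    then have "koopman_nn t F x \<le> ennreal (enn2real (koopman_nn 1 F x) powr t)"
      using t F_nonneg by (intro koopman_nn_le_powr) auto
    then show "koopman_nn t F x \<noteq> \<infinity>" by (auto simp: top_unique)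
  qed
qed

lemma norm_koopman_mu_le:
  assumes "0 < q"
  shows "ennreal (norm (koopman_mu G \<mu> act M q f x)) \<le> koopman_nn (1 / q) (\<lambda>y. norm (f y) powr q) x"
proof -
  have "ennreal (norm (koopman_mu G \<mu> act M q f x))
      \<le> (\<integral>\<^sup>+s. ennreal (norm (complex_of_real (pmf \<mu> s * rn_deriv_act s x powr (1 / q))
            * f (act (inv s) x)))
          \<partial>count_space (carrier G))"
    unfolding koopman_mu_def rn_deriv_act_def[symmetric]
    by (rule norm_infsum_le_nn_integral_count_space)
  also have "\<dots> = koopman_nn (1 / q) (\<lambda>y. norm (f y) powr q) x"
    unfolding koopman_nn_def using assms
    by (intro nn_integral_cong)
      (simp add: norm_mult abs_mult powr_mult powr_powr rn_deriv_act_nonneg)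
  finally show ?thesis .
qed

lemma koopman_mu_of_real:
  assumes "0 < q" and F_nonneg: "\<And>y. 0 \<le> F y"
  shows "koopman_mu G \<mu> act M q (\<lambda>y. complex_of_real (F y powr (1 / q)))
    = (\<lambda>x. complex_of_real (enn2real (koopman_nn (1 / q) F x)))"
proof
  fix x
  have "koopman_mu G \<mu> act M q (\<lambda>y. complex_of_real (F y powr (1 / q))) x
      = (\<Sum>\<^sub>\<infinity>s\<in>carrier G.
          complex_of_real (pmf \<mu> s * (rn_deriv_act s x * F (act (inv s) x)) powr (1 / q)))"
    unfolding koopman_mu_def rn_deriv_act_def[symmetric]
    by (intro infsum_cong) (simp add: powr_mult rn_deriv_act_nonneg F_nonneg)
  also have "\<dots> = complex_of_real (enn2real (koopman_nn (1 / q) F x))"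
    unfolding koopman_nn_def
    by (rule infsum_of_real_eq_nn_integral_count_space) (simp add: rn_deriv_act_nonneg F_nonneg)
  finally show "koopman_mu G \<mu> act M q (\<lambda>y. complex_of_real (F y powr (1 / q))) x
      = complex_of_real (enn2real (koopman_nn (1 / q) F x))" .
qed

lemma norm_koopman_mu_powr_le:
  assumes q: "1 \<le> q"
  shows "ennreal (norm (koopman_mu G \<mu> act M q f x) powr q)
      \<le> koopman_nn 1 (\<lambda>y. norm (f y) powr q) x"
proof (cases "koopman_nn 1 (\<lambda>y. norm (f y) powr q) x = \<infinity>")
  case False
  define B where "B = enn2real (koopman_nn 1 (\<lambda>y. norm (f y) powr q) x)"
  have "ennreal (norm (koopman_mu G \<mu> act M q f x)) \<le> koopman_nn (1 / q) (\<lambda>y. norm (f y) powr q) x"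
    using q by (intro norm_koopman_mu_le) auto
  also have "\<dots> \<le> ennreal (B powr (1 / q))"
    unfolding B_def using q False by (intro koopman_nn_le_powr) auto
  finally have "norm (koopman_mu G \<mu> act M q f x) powr q \<le> (B powr (1 / q)) powr q"
    using q by (intro powr_mono2) (auto simp: ennreal_le_iff)
  also have "\<dots> = B"
    using q by (simp add: B_def powr_powr)
  finally have "ennreal (norm (koopman_mu G \<mu> act M q f x) powr q) \<le> ennreal B"
    by (rule ennreal_leI)
  then show ?thesis
    using False by (simp add: B_def ennreal_enn2real_if)
qed simp

lemma nn_integral_norm_koopman_mu_powr_le:
  assumes "1 \<le> q" and [measurable]: "f \<in> borel_measurable M"
  shows "(\<integral>\<^sup>+x. ennreal (norm (koopman_mu G \<mu> act M q f x) powr q) \<partial>M)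
      \<le> (\<integral>\<^sup>+x. ennreal (norm (f x) powr q) \<partial>M)"
proof -
  have "(\<integral>\<^sup>+x. ennreal (norm (koopman_mu G \<mu> act M q f x) powr q) \<partial>M)
      \<le> (\<integral>\<^sup>+x. koopman_nn 1 (\<lambda>y. norm (f y) powr q) x \<partial>M)"
    using assms by (intro nn_integral_mono norm_koopman_mu_powr_le)
  also have "\<dots> \<le> (\<integral>\<^sup>+x. ennreal (norm (f x) powr q) \<partial>M)"
    by (rule nn_integral_koopman_nn_1_le) auto
  finally show ?thesis .
qed

lemma Lq_norm_koopman_mu_le:
  assumes q: "1 \<le> q" and f: "f \<in> Lq_space M q"
  shows "Lq_norm M q (koopman_mu G \<mu> act M q f) \<le> Lq_norm M q f"
proof -
  have [measurable]: "f \<in> borel_measurable M" and "integrable M (\<lambda>x. norm (f x) powr q)"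
    using f by (auto simp: Lq_space_def)
  then have "(\<integral>\<^sup>+x. ennreal (norm (f x) powr q) \<partial>M) \<noteq> \<infinity>"
    by (simp add: nn_integral_eq_integral)
  then have "(\<integral>\<^sup>+x. ennreal (norm (f x) powr q) \<partial>M) \<le> ennreal (Lq_norm M q f powr q)"
    using q by (intro nn_integral_le_of_Lq_norm_le) auto
  with nn_integral_norm_koopman_mu_powr_le[OF q, of f]
  have "(\<integral>\<^sup>+x. ennreal (norm (koopman_mu G \<mu> act M q f x) powr q) \<partial>M)
      \<le> ennreal (Lq_norm M q f powr q)"
    by simp
  moreover have "0 \<le> Lq_norm M q f"
    by (simp add: Lq_norm_def)
  ultimately show ?thesis
    using q by (intro Lq_norm_le_of_nn_integral_le) auto
qed

lemma koopman_opnorm_le_1: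
  assumes "1 \<le> q"
  shows "koopman_opnorm q \<le> 1"
proof (rule Lq_opnorm_le)
  fix f assume "f \<in> Lq_space M q" "Lq_norm M q f \<le> 1"
  then show "Lq_norm M q (koopman_mu G \<mu> act M q f) \<le> 1"
    using Lq_norm_koopman_mu_le[OF assms] by (blast intro: order_trans)
qed

lemma Lq_norm_koopman_mu_le_opnorm:
  assumes "1 \<le> q" "f \<in> Lq_space M q" "Lq_norm M q f \<le> 1"
  shows "Lq_norm M q (koopman_mu G \<mu> act M q f) \<le> koopman_opnorm q"
proof (rule Lq_norm_le_Lq_opnorm[where C = 1])
  fix g assume "g \<in> Lq_space M q" "Lq_norm M q g \<le> 1"
  then show "Lq_norm M q (koopman_mu G \<mu> act M q g) \<le> 1"
    using Lq_norm_koopman_mu_le[OF assms(1)] by (blast intro: order_trans)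
qed (use assms in auto)

lemma koopman_opnorm_nonneg:
  assumes "1 \<le> q"
  shows "0 \<le> koopman_opnorm q"
proof -
  have "0 \<le> Lq_norm M q (koopman_mu G \<mu> act M q (\<lambda>_. 0))"
    by (simp add: Lq_norm_def)
  also have "\<dots> \<le> koopman_opnorm q"
    using assms zero_in_Lq_unit_ball by (intro Lq_norm_koopman_mu_le_opnorm) auto
  finally show ?thesis .
qed

lemma nn_integral_koopman_nn_powr_le_opnorm:
  assumes q: "1 \<le> q" and [measurable]: "F \<in> borel_measurable M"
    and F_nonneg: "\<And>y. 0 \<le> F y" and F_le: "(\<integral>\<^sup>+y. F y \<partial>M) \<le> 1"
  shows "(\<integral>\<^sup>+x. ennreal (enn2real (koopman_nn (1 / q) F x) powr q) \<partial>M)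
      \<le> ennreal (koopman_opnorm q powr q)"
proof -
  define g where "g y = complex_of_real (F y powr (1 / q))" for y
  have norm_g: "norm (g y) powr q = F y" for y
    using q F_nonneg[of y] by (simp add: g_def powr_powr)
  have K_g: "koopman_mu G \<mu> act M q g = (\<lambda>x. complex_of_real (enn2real (koopman_nn (1 / q) F x)))"
    unfolding g_def using q F_nonneg by (intro koopman_mu_of_real) auto
  have F_finite: "(\<integral>\<^sup>+y. F y \<partial>M) \<noteq> \<infinity>"
    using F_le by (auto simp: top_unique)
  have [measurable]: "g \<in> borel_measurable M"
    unfolding g_def[abs_def] by measurable
  have "integrable M F"
    using F_finite F_nonneg by (intro integrableI_nonneg) (auto simp: top.not_eq_extremum)
  then have g: "g \<in> Lq_space M q"
    by (simp add: Lq_space_def norm_g)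
  have "(\<integral>y. F y \<partial>M) \<le> 1"
    using F_le by (intro integral_real_bounded) auto
  then have "Lq_norm M q g \<le> 1"
    unfolding Lq_norm_def norm_g using F_nonneg q by (intro powr_le1) auto
  have "(\<integral>\<^sup>+x. ennreal (norm (koopman_mu G \<mu> act M q g x) powr q) \<partial>M)
      \<le> ennreal (koopman_opnorm q powr q)"
  proof (rule nn_integral_le_of_Lq_norm_le)
    show "(\<integral>\<^sup>+x. ennreal (norm (koopman_mu G \<mu> act M q g x) powr q) \<partial>M) \<noteq> \<infinity>"
      using nn_integral_norm_koopman_mu_powr_le[OF q, of g] F_finite
      by (auto simp: norm_g top_unique)
    show "Lq_norm M q (koopman_mu G \<mu> act M q g) \<le> koopman_opnorm q"
      using q g \<open>Lq_norm M q g \<le> 1\<close> by (rule Lq_norm_koopman_mu_le_opnorm)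
  qed (use q in \<open>simp_all add: K_g\<close>)
  then show ?thesis
    by (simp add: K_g)
qed

lemma norm_koopman_mu_powr_le_interpolation:
  fixes f :: "'x \<Rightarrow> complex" and q' :: real
  defines "F \<equiv> \<lambda>y. norm (f y) powr q'"
  assumes q: "1 \<le> q" and \<theta>: "0 \<le> \<theta>" "\<theta> \<le> 1" and q': "1 / q' = (1 - \<theta>) / q + \<theta>"
    and finite: "koopman_nn 1 F x \<noteq> \<infinity>"
  shows "norm (koopman_mu G \<mu> act M q' f x) powr q'
    \<le> (enn2real (koopman_nn (1 / q) F x) powr q) powr ((1 - \<theta>) * q' / q)
      * enn2real (koopman_nn 1 F x) powr (\<theta> * q')"
proof -
  have "0 < 1 / q'" using q \<theta> q' by (cases "\<theta> = 0") (auto intro: add_nonneg_pos add_pos_nonneg)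
  then have "0 < q'" by simp
  define A B where "A = enn2real (koopman_nn (1 / q) F x)" and "B = enn2real (koopman_nn 1 F x)"
  have "koopman_nn (1 / q) F x \<le> ennreal (B powr (1 / q))"
    unfolding B_def using q finite by (intro koopman_nn_le_powr) (auto simp: F_def)
  then have "koopman_nn (1 / q) F x \<noteq> \<infinity>"
    by (auto simp: top_unique)
  have "ennreal (norm (koopman_mu G \<mu> act M q' f x)) \<le> koopman_nn ((1 - \<theta>) * (1 / q) + \<theta> * 1) F x"
    using norm_koopman_mu_le[OF \<open>0 < q'\<close>, of f x] q' by (simp add: F_def)
  also have "\<dots> \<le> ennreal (A powr (1 - \<theta>) * B powr \<theta>)"
    unfolding A_def B_def using \<theta> finite \<open>koopman_nn (1 / q) F x \<noteq> \<infinity>\<close>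
    by (intro koopman_nn_log_convex) (auto simp: F_def)
  finally have "norm (koopman_mu G \<mu> act M q' f x) powr q' \<le> (A powr (1 - \<theta>) * B powr \<theta>) powr q'"
    using \<open>0 < q'\<close> by (intro powr_mono2) (auto simp: ennreal_le_iff A_def B_def)
  also have "\<dots> = (A powr q) powr ((1 - \<theta>) * q' / q) * B powr (\<theta> * q')"
    using q by (simp add: A_def B_def powr_mult powr_powr)
  finally show ?thesis by (simp add: A_def B_def)
qed

lemma Lq_norm_koopman_mu_le_opnorm_powr:
  assumes q: "1 \<le> q" and \<theta>: "0 \<le> \<theta>" "\<theta> < 1" and q': "1 / q' = (1 - \<theta>) / q + \<theta>"
    and f: "f \<in> Lq_space M q'" "Lq_norm M q' f \<le> 1"
  shows "Lq_norm M q' (koopman_mu G \<mu> act M q' f) \<le> koopman_opnorm q powr (1 - \<theta>)"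
proof -
  have "0 < 1 / q'" using q \<theta> q' by (cases "\<theta> = 0") (auto intro: add_nonneg_pos add_pos_nonneg)
  then have "0 < q'" by simp
  define F where "F = (\<lambda>y. norm (f y) powr q')"
  define A B where "A x
      = enn2real (koopman_nn (1 / q) F x)" and "B x = enn2real (koopman_nn 1 F x)" for x
  define \<alpha> \<beta> where "\<alpha> = (1 - \<theta>) * q' / q" and "\<beta> = \<theta> * q'"
  have [measurable]: "f \<in> borel_measurable M" using f by (simp add: Lq_space_def)
  then have [measurable]: "F \<in> borel_measurable M" by (simp add: F_def)
  have "(\<integral>\<^sup>+x. ennreal (F x) \<partial>M) \<le> ennreal (1 powr q')"
    unfolding F_def using f \<open>0 < q'\<close>
    by (intro nn_integral_le_of_Lq_norm_le) (auto simp: Lq_space_def nn_integral_eq_integral)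
  then have F_le: "(\<integral>\<^sup>+x. ennreal (F x) \<partial>M) \<le> 1" by simp
  have "\<alpha> + \<beta> = q' * ((1 - \<theta>) / q + \<theta>)"
    by (simp add: \<alpha>_def \<beta>_def algebra_simps)
  then have \<alpha>\<beta>: "0 \<le> \<alpha>" "0 \<le> \<beta>" "\<alpha> + \<beta> = 1"
    using q \<theta> \<open>0 < q'\<close> by (simp_all add: \<alpha>_def \<beta>_def flip: q')
  have A_le: "(\<integral>\<^sup>+x. ennreal (A x powr q) \<partial>M) \<le> ennreal (koopman_opnorm q powr q)"
    unfolding A_def using q F_le by (intro nn_integral_koopman_nn_powr_le_opnorm) (auto simp: F_def)
  have "(\<integral>\<^sup>+x. ennreal (B x) \<partial>M) \<le> (\<integral>\<^sup>+x. koopman_nn 1 F x \<partial>M)"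
    by (intro nn_integral_mono) (simp add: B_def ennreal_enn2real_if)
  also have "\<dots> \<le> 1"
    using F_le nn_integral_koopman_nn_1_le[of F] by (auto simp: F_def)
  finally have B_le: "(\<integral>\<^sup>+x. ennreal (B x) \<partial>M) \<le> ennreal 1" by simp
  have "AE x in M. koopman_nn 1 F x \<noteq> \<infinity>"
    using F_le by (intro AE_koopman_nn_finite) (auto simp: F_def top_unique)
  then have "AE x in M. ennreal (norm (koopman_mu G \<mu> act M q' f x) powr q')
      \<le> ennreal ((A x powr q) powr \<alpha> * B x powr \<beta>)"
    by (rule eventually_mono) (use q \<theta> q' in \<open>auto simp: A_def B_def \<alpha>_def \<beta>_def F_def
        intro!: ennreal_leI norm_koopman_mu_powr_le_interpolation\<close>)
  then have "(\<integral>\<^sup>+x. ennreal (norm (koopman_mu G \<mu> act M q' f x) powr q') \<partial>M)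
      \<le> (\<integral>\<^sup>+x. ennreal ((A x powr q) powr \<alpha> * B x powr \<beta>) \<partial>M)"
    by (rule nn_integral_mono_AE)
  also have "\<dots> \<le> ennreal ((koopman_opnorm q powr q) powr \<alpha> * 1 powr \<beta>)"
    using \<alpha>\<beta> A_le B_le by (intro nn_integral_powr_mult_le) (auto simp: A_def B_def)
  also have "\<dots> = ennreal ((koopman_opnorm q powr (1 - \<theta>)) powr q')"
    using q \<open>0 < q'\<close> by (simp add: \<alpha>_def powr_powr)
  finally show ?thesis
    using \<open>0 < q'\<close> by (intro Lq_norm_le_of_nn_integral_le) auto
qed

lemma koopman_opnorm_interpolation:
  assumes "1 \<le> q" "0 \<le> \<theta>" "\<theta> < 1" "1 / q' = (1 - \<theta>) / q + \<theta>"
  shows "koopman_opnorm q' \<le> koopman_opnorm q powr (1 - \<theta>)"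
  using assms by (intro Lq_opnorm_le Lq_norm_koopman_mu_le_opnorm_powr)

section \<open>Furstenberg entropy\<close>

lemma nn_integral_koopman_nn_one:
  "(\<integral>\<^sup>+x. koopman_nn t (\<lambda>_. 1) x \<partial>M)
      = (\<integral>\<^sup>+s. (\<integral>\<^sup>+x. ennreal (rn_deriv_act s x powr t) \<partial>M) \<partial>measure_pmf \<mu>)"
proof -
  have "(\<integral>\<^sup>+x. koopman_nn t (\<lambda>_. 1) x \<partial>M)
      = (\<integral>\<^sup>+s. \<integral>\<^sup>+x. ennreal (pmf \<mu> s * (rn_deriv_act s x * 1) powr t) \<partial>M \<partial>count_space (carrier G))"
    unfolding koopman_nn_def
    by (intro nn_integral_count_space_nn_integral countable_carrier
        borel_measurable_koopman_nn_term) auto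
  also have "\<dots>
      = (\<integral>\<^sup>+s. ennreal (pmf \<mu> s) * (\<integral>\<^sup>+x. ennreal (rn_deriv_act s x powr t) \<partial>M)
          \<partial>count_space (carrier G))"
    by (intro nn_integral_cong, subst nn_integral_cmult[symmetric]) (auto simp: ennreal_mult)
  also have "\<dots> = (\<integral>\<^sup>+s. (\<integral>\<^sup>+x. ennreal (rn_deriv_act s x powr t) \<partial>M) \<partial>measure_pmf \<mu>)"
    by (rule nn_integral_pmf_carrier)
  finally show ?thesis .
qed

lemma nn_integral_koopman_nn_one_pos: "0 < (\<integral>\<^sup>+x. koopman_nn t (\<lambda>_. 1) x \<partial>M)"
proof -
  obtain s where s: "s \<in> set_pmf \<mu>"
    using set_pmf_not_empty[of \<mu>] by blast
  then have "s \<in> carrier G"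
    using set_pmf_subset_carrier by blast
  have "(\<integral>\<^sup>+x. ennreal (rn_deriv_act s x powr t) \<partial>M) \<noteq> 0"
  proof
    assume "(\<integral>\<^sup>+x. ennreal (rn_deriv_act s x powr t) \<partial>M) = 0"
    then have "AE x in M. ennreal (rn_deriv_act s x powr t) = 0"
      by (subst (asm) nn_integral_0_iff_AE) auto
    then have "AE x in M. ennreal (rn_deriv_act s x) = 0"
      by (rule eventually_mono) (simp add: rn_deriv_act_nonneg antisym)
    then have "(\<integral>\<^sup>+x. rn_deriv_act s x \<partial>M) = (\<integral>\<^sup>+x. 0 \<partial>M)"
      by (rule nn_integral_cong_AE)
    then show False
      using nn_integral_rn_deriv_act_eq_1[OF \<open>s \<in> carrier G\<close>] by simp
  qed
  then show ?thesis
    using s by (auto simp: nn_integral_koopman_nn_one zero_less_iff_neq_zero nn_integral_0_iff_AE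
          AE_measure_pmf_iff)
qed

lemma nn_integral_koopman_nn_one_le_opnorm:
  assumes q: "1 \<le> q"
  shows "(\<integral>\<^sup>+x. koopman_nn (1 / q) (\<lambda>_. 1) x \<partial>M) \<le> ennreal (koopman_opnorm q)"
proof -
  define A where "A x = enn2real (koopman_nn (1 / q) (\<lambda>_. 1) x)" for x
  have "AE x in M. koopman_nn (1 / q) (\<lambda>_. 1) x \<noteq> \<infinity>"
    using q by (intro AE_koopman_nn_finite) (auto simp: emeasure_space_1)
  then have "(\<integral>\<^sup>+x. koopman_nn (1 / q) (\<lambda>_. 1) x \<partial>M)
      = (\<integral>\<^sup>+x. ennreal ((A x powr q) powr (1 / q) * 1 powr (1 - 1 / q)) \<partial>M)"
    using q by (intro nn_integral_cong_AE)
        (auto elim!: eventually_mono simp: A_def powr_powr ennreal_enn2real_if)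
  also have "\<dots> \<le> ennreal ((koopman_opnorm q powr q) powr (1 / q) * 1 powr (1 - 1 / q))"
  proof (rule nn_integral_powr_mult_le)
    show "(\<integral>\<^sup>+x. ennreal (A x powr q) \<partial>M) \<le> ennreal (koopman_opnorm q powr q)"
      unfolding A_def using q
      by (intro nn_integral_koopman_nn_powr_le_opnorm) (auto simp: emeasure_space_1)
  qed (use q in \<open>auto simp: A_def emeasure_space_1\<close>)
  also have "\<dots> = ennreal (koopman_opnorm q)"
    using q koopman_opnorm_nonneg[OF q] by (simp add: powr_powr)
  finally show ?thesis .
qed

definition rn_entropy :: "'g \<Rightarrow> ennreal" where
  "rn_entropy s = (\<integral>\<^sup>+x. ennreal (- ln (rn_rho G act M s x)) \<partial>M)
     - (\<integral>\<^sup>+x. ennreal (ln (rn_rho G act M s x)) \<partial>M)"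

lemma furstenberg_entropy_eq_nn_integral: "furstenberg_entropy G \<mu> act M
    = (\<integral>\<^sup>+s. rn_entropy s \<partial>measure_pmf \<mu>)"
  unfolding furstenberg_entropy_def rn_entropy_def[symmetric]
  by (simp add: infsum_ennreal_eq_nn_integral_count_space countable_carrier nn_integral_pmf_carrier)

lemma exp_neg_rn_entropy_le:
  assumes s: "s \<in> carrier G" and "0 \<le> c" and finite: "rn_entropy s \<noteq> \<infinity>"
  shows "ennreal (exp (- c * enn2real (rn_entropy s)))
      \<le> (\<integral>\<^sup>+x. ennreal (rn_deriv_act s x powr (1 - c)) \<partial>M)"
proof -
  have rn_rho: "rn_rho G act M s = rn_deriv_act (inv s)"
    by (simp add: fun_eq_iff rn_rho_def rn_deriv_act_def)
  have "AE x in M. 0 < rn_deriv_act (inv s) x"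
    using rn_deriv_act_cocycle[OF s]
    by (rule eventually_mono)
      (metis less_eq_real_def mult_zero_right rn_deriv_act_nonneg zero_neq_one)
  then have "ennreal (exp (- c * enn2real (rn_entropy s)))
      \<le> (\<integral>\<^sup>+x. ennreal (rn_deriv_act (inv s) x powr c) \<partial>M)"
    using finite \<open>0 \<le> c\<close> nn_integral_rn_deriv_act_eq_1[of "inv s"] s
    unfolding rn_entropy_def rn_rho by (intro exp_neg_entropy_le_nn_integral_powr) auto
  also have "\<dots> = (\<integral>\<^sup>+x. ennreal (rn_deriv_act s x powr (1 - c)) \<partial>M)"
    by (rule nn_integral_rn_deriv_act_powr[OF s, symmetric])
  finally show ?thesis .
qed

lemma exp_neg_entropy_le_nn_integral_koopman_nn_one:
  assumes "0 \<le> c" and finite: "furstenberg_entropy G \<mu> act M \<noteq> \<infinity>"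
  shows "ennreal (exp (- c * enn2real (furstenberg_entropy G \<mu> act M)))
      \<le> (\<integral>\<^sup>+x. koopman_nn (1 - c) (\<lambda>_. 1) x \<partial>M)"
proof -
  define e where "e s = enn2real (rn_entropy s)" for s
  have AE_finite: "AE s in measure_pmf \<mu>. rn_entropy s \<noteq> \<infinity>"
    using finite by (intro nn_integral_PInf_AE) (auto simp: furstenberg_entropy_eq_nn_integral)
  then have "(\<integral>\<^sup>+s. ennreal (e s) \<partial>measure_pmf \<mu>) = furstenberg_entropy G \<mu> act M"
    unfolding furstenberg_entropy_eq_nn_integral e_def
    by (intro nn_integral_cong_AE) (auto elim!: eventually_mono simp: ennreal_enn2real_if)
  then have "integrable (measure_pmf \<mu>) e"
    and "(\<integral>s. e s \<partial>measure_pmf \<mu>) = enn2real (furstenberg_entropy G \<mu> act M)"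
    using finite
    by (auto simp: e_def integral_eq_nn_integral top.not_eq_extremum intro!: integrableI_nonneg)
  then have "ennreal (exp (- c * enn2real (furstenberg_entropy G \<mu> act M)))
      \<le> (\<integral>\<^sup>+s. ennreal (exp (- c * e s)) \<partial>measure_pmf \<mu>)"
    using measure_pmf.exp_integral_le_nn_integral_exp[of \<mu> "\<lambda>s. - c * e s"] by simp
  also have "\<dots> \<le> (\<integral>\<^sup>+s. (\<integral>\<^sup>+x. ennreal (rn_deriv_act s x powr (1 - c)) \<partial>M) \<partial>measure_pmf \<mu>)"
  proof (intro nn_integral_mono_AE)
    have "ennreal (exp (- c * e s)) \<le> (\<integral>\<^sup>+x. ennreal (rn_deriv_act s x powr (1 - c)) \<partial>M)"
      if "s \<in> set_pmf \<mu>" for s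
      using that AE_finite set_pmf_subset_carrier \<open>0 \<le> c\<close> unfolding e_def AE_measure_pmf_iff
      by (intro exp_neg_rn_entropy_le) auto
    then show "AE s in measure_pmf \<mu>. ennreal (exp (- c * e s))
        \<le> (\<integral>\<^sup>+x. ennreal (rn_deriv_act s x powr (1 - c)) \<partial>M)"
      by (simp add: AE_measure_pmf_iff)
  qed
  also have "\<dots> = (\<integral>\<^sup>+x. koopman_nn (1 - c) (\<lambda>_. 1) x \<partial>M)"
    by (rule nn_integral_koopman_nn_one[symmetric])
  finally show ?thesis .
qed

lemma koopman_opnorm_pos:
  assumes "1 \<le> q"
  shows "0 < koopman_opnorm q"
proof -
  have "0 < ennreal (koopman_opnorm q)"
    using nn_integral_koopman_nn_one_pos nn_integral_koopman_nn_one_le_opnorm[OF assms]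
    by (rule less_le_trans)
  then show ?thesis by simp
qed

lemma exp_neg_entropy_le_koopman_opnorm:
  assumes q: "1 \<le> q" and finite: "furstenberg_entropy G \<mu> act M \<noteq> \<infinity>"
  shows "exp (- (1 - 1 / q) * enn2real (furstenberg_entropy G \<mu> act M)) \<le> koopman_opnorm q"
proof -
  have "ennreal (exp (- (1 - 1 / q) * enn2real (furstenberg_entropy G \<mu> act M)))
      \<le> (\<integral>\<^sup>+x. koopman_nn (1 / q) (\<lambda>_. 1) x \<partial>M)"
    using exp_neg_entropy_le_nn_integral_koopman_nn_one[of "1 - 1 / q"] q finite by simp
  also have "\<dots> \<le> ennreal (koopman_opnorm q)"
    using q by (rule nn_integral_koopman_nn_one_le_opnorm)
  finally show ?thesis
    using koopman_opnorm_nonneg[OF q] by (simp add: ennreal_le_iff)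
qed

lemma neg_ln_koopman_opnorm_mono:
  assumes p: "1 < p" "p \<le> p'"
  shows "- p * ln (koopman_opnorm (p / (p - 1))) \<le> - p' * ln (koopman_opnorm (p' / (p' - 1)))"
proof -
  define q q' where "q = p / (p - 1)" and "q' = p' / (p' - 1)"
  have "1 \<le> q" "1 \<le> q'" using p by (simp_all add: q_def q'_def)
  have "1 / q' = (1 - (1 - p / p')) / q + (1 - p / p')"
    using p by (simp add: q_def q'_def field_simps)
  then have "koopman_opnorm q' \<le> koopman_opnorm q powr (1 - (1 - p / p'))"
    using p \<open>1 \<le> q\<close> by (intro koopman_opnorm_interpolation) auto
  then have "ln (koopman_opnorm q') \<le> ln (koopman_opnorm q powr (p / p'))"
    using koopman_opnorm_pos[OF \<open>1 \<le> q\<close>] koopman_opnorm_pos[OF \<open>1 \<le> q'\<close>]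
    by (subst ln_le_cancel_iff) auto
  also have "\<dots> = p / p' * ln (koopman_opnorm q)"
    using koopman_opnorm_pos[OF \<open>1 \<le> q\<close>] by (simp add: ln_powr)
  finally have "p' * ln (koopman_opnorm q') \<le> p * ln (koopman_opnorm q)"
    using p by (simp add: field_simps)
  then show ?thesis by (simp add: q_def q'_def)
qed

lemma neg_ln_koopman_opnorm_nonneg:
  assumes "1 < p"
  shows "0 \<le> - p * ln (koopman_opnorm (p / (p - 1)))"
proof -
  have "1 \<le> p / (p - 1)" using assms by simp
  then show ?thesis
    using assms koopman_opnorm_pos koopman_opnorm_le_1 by (simp add: mult_nonneg_nonpos)
qed

lemma neg_ln_koopman_opnorm_le_entropy:
  assumes p: "1 < p"
  shows "ennreal (- p * ln (koopman_opnorm (p / (p - 1)))) \<le> furstenberg_entropy G \<mu> act M"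
proof (cases "furstenberg_entropy G \<mu> act M = \<infinity>")
  case False
  define q where "q = p / (p - 1)"
  define H where "H = enn2real (furstenberg_entropy G \<mu> act M)"
  have "1 \<le> q" using p by (simp add: q_def)
  have "exp (- (1 - 1 / q) * H) \<le> koopman_opnorm q"
    unfolding H_def using \<open>1 \<le> q\<close> False by (rule exp_neg_entropy_le_koopman_opnorm)
  moreover have "1 - 1 / q = 1 / p"
    using p by (simp add: q_def field_simps)
  ultimately have "- H / p \<le> ln (koopman_opnorm q)"
    using koopman_opnorm_pos[OF \<open>1 \<le> q\<close>] by (simp add: ln_ge_iff)
  then have "- p * ln (koopman_opnorm q) \<le> H"
    using p by (simp add: field_simps)
  then have "ennreal (- p * ln (koopman_opnorm q)) \<le> ennreal H"
    by (rule ennreal_leI)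
  then show ?thesis
    using False by (simp add: q_def H_def ennreal_enn2real_if)
qed simp

end

lemma random_walk_action_of_stationary_space:
  assumes "group G" "countable (carrier G)" "set_pmf \<mu> \<subseteq> carrier G"
    and "stationary_space G \<mu> act M"
  shows "random_walk_action M G act \<mu>"
proof -
  have "absolutely_continuous M (distr M M (act g))" if "g \<in> carrier G" for g
    using assms(4) that unfolding stationary_space_def absolutely_continuous_def
    by (auto simp: null_sets_def emeasure_distr)
  with assms show ?thesis
    unfolding stationary_space_def random_walk_action_def random_walk_action_axioms_def
      nonsingular_action_def nonsingular_action_axioms_def
    by auto
qed

theorem proposition6p6:
  fixes G (structure) and \<mu> :: "'g pmf" and act :: "'g \<Rightarrow> 'x::polish_space \<Rightarrow> 'x"
    and M :: "'x measure"
  assumes "group G" and "countable (carrier G)" and "set_pmf \<mu> \<subseteq> carrier G"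
    and "sets M = sets borel"
    and "stationary_space G \<mu> act M"
  shows "(\<forall>p p'. 2 \<le> p \<longrightarrow> p \<le> p' \<longrightarrow>
            - p * ln (Lq_opnorm M (p / (p - 1)) (koopman_mu G \<mu> act M (p / (p - 1))))
            \<le> - p' * ln (Lq_opnorm M (p' / (p' - 1)) (koopman_mu G \<mu> act M (p' / (p' - 1)))))
       \<and> (\<forall>p::real. 2 \<le> p \<longrightarrow>
            0 \<le> - p * ln (Lq_opnorm M (p / (p - 1)) (koopman_mu G \<mu> act M (p / (p - 1))))
          \<and> ennreal (- p * ln (Lq_opnorm M (p / (p - 1)) (koopman_mu G \<mu> act M (p / (p - 1)))))
              \<le> furstenberg_entropy G \<mu> act M)"
proof -
  interpret random_walk_action M G act \<mu>
    using assms(1-3,5) by (rule random_walk_action_of_stationary_space)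
  show ?thesis
    using neg_ln_koopman_opnorm_mono neg_ln_koopman_opnorm_nonneg neg_ln_koopman_opnorm_le_entropy
    by auto
qed

end
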